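(* Let $N\ge1$, $V=\{1,\dots,N\}$, $A$ an $N\times N$ row-stochastic matrix, and $\sigma_1,\sigma_2,\dots$ random variables with values in $2^V$. Consider $x(k+1)=A_{\sigma_k}x(k)$, $k\ge1$, with deterministic $x(1)\in\mathbb R^N$. Suppose: (a) $\mathcal G(A)$ is rooted. (b) There exists $\alpha\in(0,1)$ such that whenever $\mathbb P(\sigma_k\mid\sigma_{k-1},\dots,\sigma_1)\neq0$, it is $\ge\alpha$. (c) $\mathbb P(\sigma_k=\{j\}\mid\sigma_{k-1},\dots,\sigma_1)\neq0$ for all $j\in V$ and all $k\ge1$. Then the iteration reaches consensus almost surely.
   Context: $\mathcal G(A)$ is the directed graph on $V$ with an edge $(j,i)$ iff $a_{ij}>0$; it is rooted if some node $r$ has a directed path to every other node. For $\sigma\subseteq V$, $A_\sigma$ is the matrix whose $j$-th row equals the $j$-th row of $A$ if $j\in\sigma$ and $e_j^T$ otherwise. For $k=1$ conditional probabilities given the empty past are unconditional. The iteration reaches consensus almost surely if for every $\varepsilon>0$ and every $x(1)$, $\lim_{k\to\infty}\mathbb P\big(\sum_{j=1}^N (x_j(k)-\frac1N\sum_{i=1}^N x_i(k))^2\ge\varepsilon\big)=0$. *)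

theory Defs
  imports "HOL-Probability.Probability"
begin

text \<open>Node set V = {1..N}; matrices are functions nat => nat => real,
  vectors nat => real, only entries indexed by V matter.\<close>

definition row_stochastic :: "nat \<Rightarrow> (nat \<Rightarrow> nat \<Rightarrow> real) \<Rightarrow> bool" where
  "row_stochastic N A \<longleftrightarrow>
     (\<forall>i\<in>{1..N}. (\<forall>j\<in>{1..N}. A i j \<ge> 0) \<and> (\<Sum>j\<in>{1..N}. A i j) = 1)"

definition graph_edges :: "nat \<Rightarrow> (nat \<Rightarrow> nat \<Rightarrow> real) \<Rightarrow> (nat \<times> nat) set" where
  "graph_edges N A = {(j, i). i \<in> {1..N} \<and> j \<in> {1..N} \<and> A i j > 0}"

definition rooted_graph :: "nat \<Rightarrow> (nat \<Rightarrow> nat \<Rightarrow> real) \<Rightarrow> bool" where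
  "rooted_graph N A \<longleftrightarrow> (\<exists>r\<in>{1..N}. \<forall>i\<in>{1..N}. (r, i) \<in> (graph_edges N A)\<^sup>*)"

definition restr_matrix :: "(nat \<Rightarrow> nat \<Rightarrow> real) \<Rightarrow> nat set \<Rightarrow> nat \<Rightarrow> nat \<Rightarrow> real" where
  "restr_matrix A \<sigma> j l = (if j \<in> \<sigma> then A j l else (if j = l then 1 else 0))"

definition mat_vec :: "nat \<Rightarrow> (nat \<Rightarrow> nat \<Rightarrow> real) \<Rightarrow> (nat \<Rightarrow> real) \<Rightarrow> nat \<Rightarrow> real" where
  "mat_vec N B x i = (\<Sum>l\<in>{1..N}. B i l * x l)"

text \<open>cons_iter N A \<sigma> x1 \<omega> n = x(n+1): x(1) = x1, x(k+1) = A_{sigma_k} x(k).\<close>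
primrec cons_iter ::
  "nat \<Rightarrow> (nat \<Rightarrow> nat \<Rightarrow> real) \<Rightarrow> (nat \<Rightarrow> 'a \<Rightarrow> nat set) \<Rightarrow> (nat \<Rightarrow> real) \<Rightarrow> 'a \<Rightarrow> nat \<Rightarrow> nat \<Rightarrow> real"
where
  "cons_iter N A \<sigma> x1 \<omega> 0 = x1"
| "cons_iter N A \<sigma> x1 \<omega> (Suc n) = mat_vec N (restr_matrix A (\<sigma> (Suc n) \<omega>)) (cons_iter N A \<sigma> x1 \<omega> n)"

definition disagreement :: "nat \<Rightarrow> (nat \<Rightarrow> real) \<Rightarrow> real" where
  "disagreement N x = (\<Sum>j\<in>{1..N}. (x j - (1 / real N) * (\<Sum>i\<in>{1..N}. x i))\<^sup>2)"

text \<open>Probability of the history sigma_1 = s 1, ..., sigma_k = s k (k = 0: whole space).\<close>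
definition hist_prob :: "'a measure \<Rightarrow> (nat \<Rightarrow> 'a \<Rightarrow> nat set) \<Rightarrow> nat \<Rightarrow> (nat \<Rightarrow> nat set) \<Rightarrow> real" where
  "hist_prob M \<sigma> k s = measure M {\<omega> \<in> space M. \<forall>i\<in>{1..k}. \<sigma> i \<omega> = s i}"

text \<open>P(sigma_k = s k | sigma_{k-1} = s (k-1), ..., sigma_1 = s 1), meaningful when the
  conditioning history has positive probability.\<close>
definition cond_prob :: "'a measure \<Rightarrow> (nat \<Rightarrow> 'a \<Rightarrow> nat set) \<Rightarrow> nat \<Rightarrow> (nat \<Rightarrow> nat set) \<Rightarrow> real" where
  "cond_prob M \<sigma> k s = hist_prob M \<sigma> k s / hist_prob M \<sigma> (k - 1) s"

end

theory Submission
  imports Defs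
begin

(* The spread max - min of x(k) never increases, because every row of A_sigma is a convex
   combination. List the nodes of a spanning tree of G(A) rooted at r, parents first, as
   v_1, ..., v_L. If the L selections after time n are the singletons {v_1}, ..., {v_L}, each v_t
   is averaged with a node that has already been pulled towards x_r(n), so the spread contracts
   by the factor 1 - eta^L, where eta is the smallest positive entry of A. By (b) and (c), after
   any history this block follows with probability at least alpha^L. Hence, with c = 1 - eta^L,
   p(b, m) = P(spread at time bL > c^m spread(x(1))) satisfies
   p(b+1, m+1) <= (1 - alpha^L) p(b, m+1) + p(b, m), and induction on m yields p(b, m) -> 0 as
   b -> infinity for every m. The disagreement is at most N times the squared spread. *)

section \<open>Spread of the iteration\<close>

definition spread :: "nat \<Rightarrow> (nat \<Rightarrow> real) \<Rightarrow> real" where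
  "spread N x = Max (x ` {1..N}) - Min (x ` {1..N})"

primrec trajectory ::
  "nat \<Rightarrow> (nat \<Rightarrow> nat \<Rightarrow> real) \<Rightarrow> (nat \<Rightarrow> nat set) \<Rightarrow> (nat \<Rightarrow> real) \<Rightarrow> nat \<Rightarrow> nat \<Rightarrow> real"
where
  "trajectory N A h x1 0 = x1"
| "trajectory N A h x1 (Suc n) = mat_vec N (restr_matrix A (h (Suc n))) (trajectory N A h x1 n)"

lemma cons_iter_eq_trajectory: "cons_iter N A \<sigma> x1 \<omega> n = trajectory N A (\<lambda>k. \<sigma> k \<omega>) x1 n"
  by (induction n) simp_all

lemma trajectory_cong:
  "(\<And>i. i \<in> {1..n} \<Longrightarrow> h i = h' i) \<Longrightarrow> trajectory N A h x1 n = trajectory N A h' x1 n"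
  by (induction n) simp_all

lemma mat_vec_uminus: "mat_vec N B (- x) = - mat_vec N B x"
  by (simp add: mat_vec_def fun_eq_iff sum_negf)

lemma trajectory_uminus: "trajectory N A h (- x1) n = - trajectory N A h x1 n"
  by (induction n) (simp_all add: mat_vec_def fun_eq_iff sum_negf)

lemma mat_vec_restr_matrix_outside:
  assumes "i \<notin> s" and "i \<in> {1..N}"
  shows "mat_vec N (restr_matrix A s) x i = x i"
proof -
  have "mat_vec N (restr_matrix A s) x i = (\<Sum>l\<in>{1..N}. if i = l then x l else 0)"
    unfolding mat_vec_def restr_matrix_def using assms(1) by (intro sum.cong) auto
  with assms(2) show ?thesis by simp
qed

lemma mat_vec_restr_matrix_inside:
  "i \<in> s \<Longrightarrow> mat_vec N (restr_matrix A s) x i = (\<Sum>l\<in>{1..N}. A i l * x l)"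
  by (simp add: mat_vec_def restr_matrix_def)

lemma row_average_ge:
  assumes "row_stochastic N A" and "j \<in> {1..N}" and "p \<in> {1..N}"
    and lo: "\<forall>l\<in>{1..N}. lo \<le> x l"
  shows "lo + A j p * (x p - lo) \<le> (\<Sum>l\<in>{1..N}. A j l * x l)"
proof -
  have row_sum: "(\<Sum>l\<in>{1..N}. A j l) = 1" and nonneg: "\<forall>l\<in>{1..N}. 0 \<le> A j l"
    using assms(1,2) unfolding row_stochastic_def by auto
  have "A j p * (x p - lo) \<le> (\<Sum>l\<in>{1..N}. A j l * (x l - lo))"
    by (rule member_le_sum) (use assms(3) nonneg lo in auto)
  also have "\<dots> = (\<Sum>l\<in>{1..N}. A j l * x l) - lo"
    using row_sum by (simp add: right_diff_distrib sum_subtractf flip: sum_distrib_right)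
  finally show ?thesis by simp
qed

lemma mat_vec_restr_matrix_ge:
  assumes rs: "row_stochastic N A" and lo: "\<forall>l\<in>{1..N}. lo \<le> x l" and i: "i \<in> {1..N}"
  shows "lo \<le> mat_vec N (restr_matrix A s) x i"
proof (cases "i \<in> s")
  case True
  have "0 \<le> A i i * (x i - lo)"
    using rs i lo unfolding row_stochastic_def by simp
  then show ?thesis
    using row_average_ge[OF rs i i lo] True by (simp add: mat_vec_restr_matrix_inside)
qed (use lo i in \<open>simp add: mat_vec_restr_matrix_outside\<close>)

lemma mat_vec_restr_matrix_le:
  assumes rs: "row_stochastic N A" and hi: "\<forall>l\<in>{1..N}. x l \<le> hi" and i: "i \<in> {1..N}"
  shows "mat_vec N (restr_matrix A s) x i \<le> hi"
  using mat_vec_restr_matrix_ge[OF rs _ i, of "- hi" "- x" s] hi by (simp add: mat_vec_uminus)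

lemma trajectory_ge:
  assumes rs: "row_stochastic N A" and "n \<le> n'"
    and lo: "\<forall>l\<in>{1..N}. lo \<le> trajectory N A h x1 n l"
  shows "\<forall>l\<in>{1..N}. lo \<le> trajectory N A h x1 n' l"
  using assms(2)
proof (induction n' rule: dec_induct)
  case (step n')
  then show ?case using mat_vec_restr_matrix_ge[OF rs] by simp
qed (rule lo)

lemma spread_mat_vec_restr_matrix_le:
  assumes rs: "row_stochastic N A" and "N \<ge> 1"
  shows "spread N (mat_vec N (restr_matrix A s) x) \<le> spread N x"
proof -
  let ?x' = "mat_vec N (restr_matrix A s) x"
  have V: "finite {1..N}" "{1..N} \<noteq> {}" using \<open>N \<ge> 1\<close> by auto
  have "\<forall>i\<in>{1..N}. Min (x ` {1..N}) \<le> ?x' i \<and> ?x' i \<le> Max (x ` {1..N})"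
    using mat_vec_restr_matrix_ge[OF rs] mat_vec_restr_matrix_le[OF rs] V by simp
  then have "Min (x ` {1..N}) \<le> Min (?x' ` {1..N})" "Max (?x' ` {1..N}) \<le> Max (x ` {1..N})"
    using V by simp_all
  then show ?thesis unfolding spread_def by linarith
qed

lemma spread_nonneg:
  assumes "N \<ge> 1"
  shows "0 \<le> spread N x"
proof -
  have "x 1 \<in> x ` {1..N}" using assms by simp
  then show ?thesis unfolding spread_def using Min_le[of "x ` {1..N}"] Max_ge[of "x ` {1..N}"] by force
qed

lemma disagreement_le_spread:
  assumes "N \<ge> 1"
  shows "disagreement N x \<le> real N * (spread N x)\<^sup>2"
proof -
  let ?V = "{1..N}"
  let ?mean = "(1 / real N) * (\<Sum>i\<in>?V. x i)"
  have V: "finite ?V" "?V \<noteq> {}" and N: "real N > 0" using assms by auto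
  have "real N * Min (x ` ?V) \<le> (\<Sum>i\<in>?V. x i)" "(\<Sum>i\<in>?V. x i) \<le> real N * Max (x ` ?V)"
    using sum_mono[of ?V "\<lambda>_. Min (x ` ?V)" x] sum_mono[of ?V x "\<lambda>_. Max (x ` ?V)"] V by auto
  then have mean: "Min (x ` ?V) \<le> ?mean" "?mean \<le> Max (x ` ?V)"
    using N by (simp_all add: field_simps)
  have "(x j - ?mean)\<^sup>2 \<le> (spread N x)\<^sup>2" if "j \<in> ?V" for j
  proof -
    have "Min (x ` ?V) \<le> x j" "x j \<le> Max (x ` ?V)" using that V by simp_all
    then have "\<bar>x j - ?mean\<bar> \<le> spread N x" using mean unfolding spread_def by linarith
    then show ?thesis by (metis abs_ge_zero power2_abs power_mono)
  qed
  then have "disagreement N x \<le> (\<Sum>j\<in>?V. (spread N x)\<^sup>2)"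
    unfolding disagreement_def by (rule sum_mono)
  then show ?thesis by simp
qed

section \<open>Spanning orders and contraction of the spread\<close>

inductive spanning_order :: "nat \<Rightarrow> (nat \<Rightarrow> nat \<Rightarrow> real) \<Rightarrow> nat \<Rightarrow> nat list \<Rightarrow> bool"
  for N A r
where
  Nil: "spanning_order N A r []"
| snoc: "spanning_order N A r ls \<Longrightarrow> j \<in> {1..N} \<Longrightarrow> p \<in> insert r (set ls) \<Longrightarrow> 0 < A j p \<Longrightarrow>
    spanning_order N A r (ls @ [j])"

lemma spanning_order_set: "spanning_order N A r ls \<Longrightarrow> set ls \<subseteq> {1..N}"
  by (induction rule: spanning_order.induct) auto

lemma rtrancl_leaves_set:
  assumes "(r, i) \<in> E\<^sup>*" and "r \<in> S" and "i \<notin> S"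
  obtains u v where "(u, v) \<in> E" "u \<in> S" "v \<notin> S"
proof (rule ccontr)
  assume "\<not> thesis"
  with that have "E `` S \<subseteq> S" by blast
  then have "E\<^sup>* `` S = S" by (rule Image_closed_trancl)
  moreover have "i \<in> E\<^sup>* `` S" using assms(1,2) by blast
  ultimately show False using assms(3) by blast
qed

lemma rooted_graph_spanning_order:
  assumes "rooted_graph N A"
  obtains r ls where "r \<in> {1..N}" "spanning_order N A r ls" "insert r (set ls) = {1..N}"
proof -
  let ?V = "{1..N}"
  obtain r where r: "r \<in> ?V" and root: "\<forall>i\<in>?V. (r, i) \<in> (graph_edges N A)\<^sup>*"
    using assms unfolding rooted_graph_def by blast
  have "\<exists>ls'. spanning_order N A r ls' \<and> insert r (set ls') = ?V"
    if "spanning_order N A r ls" for ls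
    using that
  proof (induction "card (?V - insert r (set ls))" arbitrary: ls rule: less_induct)
    case less
    let ?S = "insert r (set ls)"
    have S: "?S \<subseteq> ?V" using r spanning_order_set[OF less.prems] by simp
    show ?case
    proof (cases "?S = ?V")
      case False
      with S obtain i where "i \<in> ?V" "i \<notin> ?S" by blast
      then obtain u v where uv: "(u, v) \<in> graph_edges N A" "u \<in> ?S" "v \<notin> ?S"
        using rtrancl_leaves_set[of r i _ ?S] root by blast
      then have v: "v \<in> ?V" "0 < A v u" by (simp_all add: graph_edges_def)
      have ord: "spanning_order N A r (ls @ [v])"
        by (rule spanning_order.snoc[OF less.prems v(1) uv(2) v(2)])
      have "?V - insert r (set (ls @ [v])) = (?V - ?S) - {v}" by auto
      also have "card \<dots> < card (?V - ?S)"
        by (rule card_Diff1_less) (use v(1) uv(3) in auto)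
      finally show ?thesis by (rule less.hyps[OF _ ord])
    qed (use less.prems in blast)
  qed
  from this[OF spanning_order.Nil] obtain ls where "spanning_order N A r ls" "insert r (set ls) = ?V"
    by blast
  with r show ?thesis by (rule that)
qed

lemma positive_entries_bounded_below:
  fixes N :: nat and A :: "nat \<Rightarrow> nat \<Rightarrow> real"
  obtains \<eta> :: real where "0 < \<eta>" "\<eta> \<le> 1"
    "\<And>i j. i \<in> {1..N} \<Longrightarrow> j \<in> {1..N} \<Longrightarrow> 0 < A i j \<Longrightarrow> \<eta> \<le> A i j"
proof
  let ?P = "insert 1 {A i j | i j. i \<in> {1..N} \<and> j \<in> {1..N} \<and> 0 < A i j}"
  have "?P \<subseteq> insert 1 ((\<lambda>(i, j). A i j) ` ({1..N} \<times> {1..N}))" by auto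
  then have "finite ?P" by (rule finite_subset) (auto intro: finite_imageI)
  then show "0 < Min ?P" "Min ?P \<le> 1" by auto
  show "Min ?P \<le> A i j" if "i \<in> {1..N}" "j \<in> {1..N}" "0 < A i j" for i j
    using \<open>finite ?P\<close> that by (intro Min_le) blast+
qed

definition follows_block :: "nat \<Rightarrow> nat list \<Rightarrow> (nat \<Rightarrow> nat set) \<Rightarrow> bool" where
  "follows_block n ls h \<longleftrightarrow> (\<forall>t<length ls. h (Suc (n + t)) = {ls ! t})"

lemma follows_block_snoc:
  "follows_block n (ls @ [j]) h \<longleftrightarrow> follows_block n ls h \<and> h (Suc (n + length ls)) = {j}"
  by (auto simp: follows_block_def nth_append less_Suc_eq)

lemma spanning_order_lower_bound:
  assumes rs: "row_stochastic N A" and r: "r \<in> {1..N}"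
    and \<eta>: "0 \<le> \<eta>" "\<eta> \<le> 1" "\<And>i j. i \<in> {1..N} \<Longrightarrow> j \<in> {1..N} \<Longrightarrow> 0 < A i j \<Longrightarrow> \<eta> \<le> A i j"
    and lo: "\<forall>l\<in>{1..N}. lo \<le> trajectory N A h x1 n l"
    and "spanning_order N A r ls" and "follows_block n ls h"
  shows "\<forall>i\<in>insert r (set ls).
    lo + \<eta> ^ length ls * (trajectory N A h x1 n r - lo) \<le> trajectory N A h x1 (n + length ls) i"
  using assms(7,8)
proof (induction ls rule: spanning_order.induct)
  case (snoc ls j p)
  let ?y = "trajectory N A h x1 (n + length ls)"
  let ?d = "\<eta> ^ length ls * (trajectory N A h x1 n r - lo)"
  have IH: "\<forall>i\<in>insert r (set ls). lo + ?d \<le> ?y i"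
    using snoc follows_block_snoc by blast
  have d: "0 \<le> ?d" using lo r \<eta> by simp
  have y_ge: "\<forall>l\<in>{1..N}. lo \<le> ?y l" by (rule trajectory_ge[OF rs _ lo]) simp
  have step: "trajectory N A h x1 (n + length (ls @ [j])) = mat_vec N (restr_matrix A {j}) ?y"
    using snoc.prems by (simp add: follows_block_snoc)
  have p: "p \<in> {1..N}" using snoc.hyps(3) r spanning_order_set[OF snoc.hyps(1)] by auto
  have "lo + \<eta> * ?d \<le> mat_vec N (restr_matrix A {j}) ?y i" if i: "i \<in> insert r (set (ls @ [j]))" for i
  proof (cases "i = j")
    case True
    have "\<eta> * ?d \<le> A j p * (?y p - lo)"
      using IH snoc.hyps(3,4) \<eta>(3)[OF snoc.hyps(2) p] d by (intro mult_mono) auto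
    also have "lo + \<dots> \<le> mat_vec N (restr_matrix A {j}) ?y j"
      using row_average_ge[OF rs snoc.hyps(2) p y_ge] by (simp add: mat_vec_restr_matrix_inside)
    finally show ?thesis using True by simp
  next
    case False
    then have "i \<in> insert r (set ls)" "i \<in> {1..N}"
      using i r spanning_order_set[OF snoc.hyps(1)] by auto
    moreover have "\<eta> * ?d \<le> ?d" using d \<eta>(1,2) by (simp add: mult_left_le_one_le)
    moreover have "mat_vec N (restr_matrix A {j}) ?y i = ?y i"
      using False \<open>i \<in> {1..N}\<close> by (simp add: mat_vec_restr_matrix_outside)
    ultimately show ?thesis using IH by fastforce
  qed
  then show ?case by (simp only: step) (simp add: mult.assoc)
qed simp

lemma Min_trajectory_spanning_block:
  assumes rs: "row_stochastic N A" and r: "r \<in> {1..N}"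
    and \<eta>: "0 \<le> \<eta>" "\<eta> \<le> 1" "\<And>i j. i \<in> {1..N} \<Longrightarrow> j \<in> {1..N} \<Longrightarrow> 0 < A i j \<Longrightarrow> \<eta> \<le> A i j"
    and ord: "spanning_order N A r ls" "insert r (set ls) = {1..N}" and "follows_block n ls h"
  shows "Min (trajectory N A h x1 n ` {1..N})
      + \<eta> ^ length ls * (trajectory N A h x1 n r - Min (trajectory N A h x1 n ` {1..N}))
    \<le> Min (trajectory N A h x1 (n + length ls) ` {1..N})"
proof -
  have V: "finite {1..N}" "{1..N} \<noteq> {}" using r by auto
  show ?thesis
    using spanning_order_lower_bound[OF rs r \<eta> _ ord(1) \<open>follows_block n ls h\<close>,
        of "Min (trajectory N A h x1 n ` {1..N})" x1] ord(2) V
    by simp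
qed

lemma spread_contraction:
  assumes rs: "row_stochastic N A" and r: "r \<in> {1..N}"
    and \<eta>: "0 \<le> \<eta>" "\<eta> \<le> 1" "\<And>i j. i \<in> {1..N} \<Longrightarrow> j \<in> {1..N} \<Longrightarrow> 0 < A i j \<Longrightarrow> \<eta> \<le> A i j"
    and ord: "spanning_order N A r ls" "insert r (set ls) = {1..N}" and "follows_block n ls h"
  shows "spread N (trajectory N A h x1 (n + length ls))
    \<le> (1 - \<eta> ^ length ls) * spread N (trajectory N A h x1 n)"
proof -
  let ?V = "{1..N}" and ?c = "\<eta> ^ length ls"
  let ?x = "trajectory N A h x1 n" and ?y = "trajectory N A h x1 (n + length ls)"
  have V: "finite ?V" "?V \<noteq> {}" using r by auto
  note block = Min_trajectory_spanning_block[OF rs r \<eta> ord \<open>follows_block n ls h\<close>]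
  have "Min (?x ` ?V) + ?c * (?x r - Min (?x ` ?V)) \<le> Min (?y ` ?V)"
    by (rule block)
  moreover have "- Max (?x ` ?V) + ?c * (- ?x r + Max (?x ` ?V)) \<le> - Max (?y ` ?V)"
  proof -
    have neg: "Min ((- f) ` ?V) = - Max (f ` ?V)" for f :: "nat \<Rightarrow> real"
      using minus_Max_eq_Min[of "f ` ?V"] V by (simp add: image_image fun_Compl_def)
    have "Min (trajectory N A h (- x1) n ` ?V)
        + ?c * (trajectory N A h (- x1) n r - Min (trajectory N A h (- x1) n ` ?V))
      \<le> Min (trajectory N A h (- x1) (n + length ls) ` ?V)"
      by (rule block)
    then show ?thesis by (simp only: trajectory_uminus neg uminus_apply) simp
  qed
  ultimately show ?thesis unfolding spread_def by (simp add: algebra_simps)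
qed

section \<open>Events determined by the selection history\<close>

definition history_event ::
  "'a measure \<Rightarrow> (nat \<Rightarrow> 'a \<Rightarrow> nat set) \<Rightarrow> ((nat \<Rightarrow> nat set) \<Rightarrow> bool) \<Rightarrow> 'a set" where
  "history_event M \<sigma> Q = {\<omega> \<in> space M. Q (\<lambda>i. \<sigma> i \<omega>)}"

definition history_cylinder ::
  "'a measure \<Rightarrow> (nat \<Rightarrow> 'a \<Rightarrow> nat set) \<Rightarrow> nat \<Rightarrow> (nat \<Rightarrow> nat set) \<Rightarrow> 'a set" where
  "history_cylinder M \<sigma> n s = {\<omega> \<in> space M. \<forall>i\<in>{1..n}. \<sigma> i \<omega> = s i}"

definition histories :: "nat \<Rightarrow> nat \<Rightarrow> (nat \<Rightarrow> nat set) set" where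
  "histories N n = PiE {1..n} (\<lambda>_. Pow {1..N})"

definition prefix_determined :: "nat \<Rightarrow> ((nat \<Rightarrow> 'b) \<Rightarrow> 'c) \<Rightarrow> bool" where
  "prefix_determined n f \<longleftrightarrow> (\<forall>h h'. (\<forall>i\<in>{1..n}. h i = h' i) \<longrightarrow> f h = f h')"

lemma prefix_determinedD:
  "prefix_determined n f \<Longrightarrow> (\<And>i. i \<in> {1..n} \<Longrightarrow> h i = h' i) \<Longrightarrow> f h = f h'"
  unfolding prefix_determined_def by blast

lemma prefix_determined_comp: "prefix_determined n f \<Longrightarrow> prefix_determined n (\<lambda>h. g (f h))"
  unfolding prefix_determined_def by metis

lemma prefix_determined_follows_block:
  assumes "prefix_determined n Q"
  shows "prefix_determined (n + length ls) (\<lambda>h. Q h \<and> follows_block n ls h)"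
  unfolding prefix_determined_def
proof (intro allI impI)
  fix h h' :: "nat \<Rightarrow> nat set"
  assume agree: "\<forall>i\<in>{1..n + length ls}. h i = h' i"
  then have "Q h = Q h'" by (intro prefix_determinedD[OF assms]) simp
  moreover have "follows_block n ls h = follows_block n ls h'"
    using agree by (simp add: follows_block_def)
  ultimately show "(Q h \<and> follows_block n ls h) = (Q h' \<and> follows_block n ls h')" by simp
qed

lemma prefix_determined_trajectory: "prefix_determined n (\<lambda>h. trajectory N A h x1 n)"
  unfolding prefix_determined_def by (auto intro: trajectory_cong)

lemma hist_prob_eq_measure_history_cylinder: "hist_prob M \<sigma> n s = measure M (history_cylinder M \<sigma> n s)"
  unfolding hist_prob_def history_cylinder_def ..

lemma history_cylinder_Suc:
  "history_cylinder M \<sigma> (Suc n) s = history_cylinder M \<sigma> n s \<inter> {\<omega> \<in> space M. \<sigma> (Suc n) \<omega> = s (Suc n)}"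
  unfolding history_cylinder_def by (auto simp: atLeastAtMostSuc_conv)

lemma disjoint_family_on_history_cylinder: "disjoint_family_on (history_cylinder M \<sigma> n) (histories N n)"
  unfolding disjoint_family_on_def
proof (intro ballI impI)
  fix h h' assume "h \<in> histories N n" "h' \<in> histories N n" "h \<noteq> h'"
  then obtain i where "i \<in> {1..n}" "h i \<noteq> h' i"
    unfolding histories_def using PiE_ext by metis
  then show "history_cylinder M \<sigma> n h \<inter> history_cylinder M \<sigma> n h' = {}"
    unfolding history_cylinder_def by auto
qed

lemma finite_histories: "finite (histories N n)"
  unfolding histories_def by (intro finite_PiE) auto

locale selection_process = prob_space M
  for M :: "'a measure" +
  fixes N :: nat and \<sigma> :: "nat \<Rightarrow> 'a \<Rightarrow> nat set"
  assumes measurable_selection: "\<And>k. k \<ge> 1 \<Longrightarrow> \<sigma> k \<in> M \<rightarrow>\<^sub>M count_space UNIV"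
    and selection_subset: "\<And>k \<omega>. k \<ge> 1 \<Longrightarrow> \<omega> \<in> space M \<Longrightarrow> \<sigma> k \<omega> \<subseteq> {1..N}"
begin

lemma sets_history_cylinder: "history_cylinder M \<sigma> n s \<in> sets M"
proof (induction n)
  case (Suc n)
  have "{\<omega> \<in> space M. \<sigma> (Suc n) \<omega> = s (Suc n)} \<in> sets M"
    using measurable_selection[of "Suc n"] by (simp add: measurable_count_space_eq2_countable)
  with Suc show ?case by (simp add: history_cylinder_Suc)
qed (simp add: history_cylinder_def)

lemma history_event_eq_UN:
  assumes "prefix_determined n Q"
  shows "history_event M \<sigma> Q = (\<Union>h\<in>{h \<in> histories N n. Q h}. history_cylinder M \<sigma> n h)"
proof (intro equalityI subsetI)
  fix \<omega> assume \<omega>: "\<omega> \<in> history_event M \<sigma> Q"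
  let ?h = "restrict (\<lambda>i. \<sigma> i \<omega>) {1..n}"
  have "?h \<in> histories N n" using \<omega> selection_subset by (auto simp: histories_def history_event_def)
  moreover have "Q ?h = Q (\<lambda>i. \<sigma> i \<omega>)" by (rule prefix_determinedD[OF assms]) simp
  then have "Q ?h" using \<omega> by (simp add: history_event_def)
  moreover have "\<omega> \<in> history_cylinder M \<sigma> n ?h"
    using \<omega> by (simp add: history_cylinder_def history_event_def)
  ultimately show "\<omega> \<in> (\<Union>h\<in>{h \<in> histories N n. Q h}. history_cylinder M \<sigma> n h)" by blast
next
  fix \<omega> assume "\<omega> \<in> (\<Union>h\<in>{h \<in> histories N n. Q h}. history_cylinder M \<sigma> n h)"
  then obtain h where h: "Q h" and \<omega>: "\<omega> \<in> history_cylinder M \<sigma> n h" by blast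
  have "Q (\<lambda>i. \<sigma> i \<omega>) = Q h"
    by (rule prefix_determinedD[OF assms]) (use \<omega> in \<open>simp add: history_cylinder_def\<close>)
  with h \<omega> show "\<omega> \<in> history_event M \<sigma> Q"
    by (simp add: history_cylinder_def history_event_def)
qed

lemma sets_history_event:
  assumes "prefix_determined n Q"
  shows "history_event M \<sigma> Q \<in> sets M"
  unfolding history_event_eq_UN[OF assms]
  by (intro sets.finite_UN) (simp_all add: finite_histories sets_history_cylinder)

lemma sets_cons_iter_event: "{\<omega> \<in> space M. P (cons_iter N' A \<sigma> x1 \<omega> n)} \<in> sets M"
  using sets_history_event[OF prefix_determined_comp[OF prefix_determined_trajectory]]
  by (simp add: history_event_def cons_iter_eq_trajectory)

lemma measure_history_event:
  assumes "prefix_determined n Q"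
  shows "measure M (history_event M \<sigma> Q) = (\<Sum>h\<in>{h \<in> histories N n. Q h}. hist_prob M \<sigma> n h)"
  unfolding history_event_eq_UN[OF assms] hist_prob_eq_measure_history_cylinder
  by (rule finite_measure_finite_Union)
    (auto simp: finite_histories sets_history_cylinder
      intro: disjoint_family_on_mono[OF _ disjoint_family_on_history_cylinder])

end

locale singleton_bounded_selection = selection_process +
  fixes \<alpha> :: real
  assumes \<alpha>_pos: "0 < \<alpha>" and \<alpha>_le_1: "\<alpha> \<le> 1"
    and cond_prob_ge: "\<And>k s. k \<ge> 1 \<Longrightarrow> hist_prob M \<sigma> (k - 1) s > 0 \<Longrightarrow>
      cond_prob M \<sigma> k s \<noteq> 0 \<Longrightarrow> cond_prob M \<sigma> k s \<ge> \<alpha>"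
    and cond_prob_singleton: "\<And>k s j. k \<ge> 1 \<Longrightarrow> hist_prob M \<sigma> (k - 1) s > 0 \<Longrightarrow> j \<in> {1..N} \<Longrightarrow>
      cond_prob M \<sigma> k (s(k := {j})) \<noteq> 0"
begin

lemma hist_prob_singleton_step:
  assumes "j \<in> {1..N}"
  shows "\<alpha> * hist_prob M \<sigma> n s \<le> hist_prob M \<sigma> (Suc n) (s(Suc n := {j}))"
proof (cases "hist_prob M \<sigma> n s > 0")
  case True
  have same_past: "hist_prob M \<sigma> n (s(Suc n := {j})) = hist_prob M \<sigma> n s"
    unfolding hist_prob_def by (rule arg_cong[where f = "measure M"]) auto
  then have "\<alpha> \<le> cond_prob M \<sigma> (Suc n) (s(Suc n := {j}))"
    using cond_prob_ge[of "Suc n"] cond_prob_singleton[of "Suc n" s j] True assms by simp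
  with True same_past show ?thesis by (simp add: cond_prob_def pos_le_divide_eq)
next
  case False
  moreover have "0 \<le> hist_prob M \<sigma> n s" by (simp add: hist_prob_def)
  ultimately have "hist_prob M \<sigma> n s = 0" by linarith
  then show ?thesis by (simp add: hist_prob_def)
qed

lemma measure_history_event_singleton:
  assumes Q: "prefix_determined n Q" and j: "j \<in> {1..N}"
  shows "\<alpha> * measure M (history_event M \<sigma> Q)
    \<le> measure M (history_event M \<sigma> (\<lambda>h. Q h \<and> h (Suc n) = {j}))"
proof -
  let ?I = "{h \<in> histories N n. Q h}"
  let ?C = "\<lambda>h. history_cylinder M \<sigma> (Suc n) (h(Suc n := {j}))"
  have C: "?C h = history_cylinder M \<sigma> n h \<inter> {\<omega> \<in> space M. \<sigma> (Suc n) \<omega> = {j}}" for h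
    unfolding history_cylinder_Suc by (auto simp: history_cylinder_def)
  have "history_event M \<sigma> (\<lambda>h. Q h \<and> h (Suc n) = {j})
      = history_event M \<sigma> Q \<inter> {\<omega> \<in> space M. \<sigma> (Suc n) \<omega> = {j}}"
    by (auto simp: history_event_def)
  also have "\<dots> = (\<Union>h\<in>?I. ?C h)"
    unfolding history_event_eq_UN[OF Q] C by blast
  finally have event: "history_event M \<sigma> (\<lambda>h. Q h \<and> h (Suc n) = {j}) = (\<Union>h\<in>?I. ?C h)" .
  have "disjoint_family_on ?C ?I"
  proof (rule disjoint_family_on_bisimulation[OF
        disjoint_family_on_mono[OF _ disjoint_family_on_history_cylinder]])
    show "?I \<subseteq> histories N n" by blast
    fix h h' assume "history_cylinder M \<sigma> n h \<inter> history_cylinder M \<sigma> n h' = {}"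
    then show "?C h \<inter> ?C h' = {}" unfolding C by blast
  qed
  then have "measure M (\<Union>h\<in>?I. ?C h) = (\<Sum>h\<in>?I. hist_prob M \<sigma> (Suc n) (h(Suc n := {j})))"
    unfolding hist_prob_eq_measure_history_cylinder
    by (intro finite_measure_finite_Union) (auto simp: finite_histories sets_history_cylinder)
  also have "\<dots> \<ge> (\<Sum>h\<in>?I. \<alpha> * hist_prob M \<sigma> n h)"
    by (intro sum_mono hist_prob_singleton_step j)
  finally show ?thesis
    by (simp add: event measure_history_event[OF Q] sum_distrib_left)
qed

lemma measure_history_event_follows_block:
  assumes Q: "prefix_determined n Q" and ls: "set ls \<subseteq> {1..N}"
  shows "\<alpha> ^ length ls * measure M (history_event M \<sigma> Q)
    \<le> measure M (history_event M \<sigma> (\<lambda>h. Q h \<and> follows_block n ls h))"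
  using ls
proof (induction ls rule: rev_induct)
  case (snoc j ls)
  let ?Q = "\<lambda>h. Q h \<and> follows_block n ls h"
  have "\<alpha> ^ length (ls @ [j]) * measure M (history_event M \<sigma> Q)
      \<le> \<alpha> * measure M (history_event M \<sigma> ?Q)"
    using snoc \<alpha>_pos by simp
  also have "\<dots> \<le> measure M (history_event M \<sigma> (\<lambda>h. ?Q h \<and> h (Suc (n + length ls)) = {j}))"
    using measure_history_event_singleton[OF prefix_determined_follows_block[OF Q]] snoc.prems
    by simp
  finally show ?case by (simp add: follows_block_snoc conj_assoc)
qed (simp add: follows_block_def)

end

section \<open>Convergence in probability\<close>

lemma tendsto_zero_of_contracting_recursion:
  fixes a e :: "nat \<Rightarrow> real"
  assumes nonneg: "\<And>b. 0 \<le> a b" and bounded: "\<And>b. a b \<le> K"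
    and recursion: "\<And>b. a (Suc b) \<le> q * a b + e b"
    and q: "0 \<le> q" "q < 1" and e: "e \<longlonglongrightarrow> 0"
  shows "a \<longlonglongrightarrow> 0"
proof (rule order_tendstoI)
  fix r :: real
  assume "r < 0"
  then show "eventually (\<lambda>b. r < a b) sequentially" using nonneg by (simp add: less_le_trans)
next
  fix r :: real
  assume "0 < r"
  define d where "d = r / 2"
  have d: "0 < d" "d < r" using \<open>0 < r\<close> by (simp_all add: d_def)
  have "eventually (\<lambda>b. e b < d * (1 - q)) sequentially"
    using e d q by (intro order_tendstoD(2)) auto
  then obtain B where B: "\<And>b. b \<ge> B \<Longrightarrow> e b < d * (1 - q)"
    by (auto simp: eventually_sequentially)
  have bound: "a (k + B) \<le> q ^ k * K + d" for k
  proof (induction k)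
    case 0
    show ?case using bounded[of B] d by simp
  next
    case (Suc k)
    have "a (Suc k + B) \<le> q * a (k + B) + e (k + B)" using recursion by simp
    also have "\<dots> \<le> q * (q ^ k * K + d) + d * (1 - q)"
      using Suc.IH B[of "k + B"] q by (intro add_mono mult_left_mono) auto
    also have "\<dots> = q ^ Suc k * K + d" by (simp add: algebra_simps)
    finally show ?case .
  qed
  have "(\<lambda>k. q ^ k * K) \<longlonglongrightarrow> 0" using q by (intro tendsto_mult_left_zero LIMSEQ_realpow_zero)
  then have "eventually (\<lambda>k. q ^ k * K < r - d) sequentially"
    using d by (intro order_tendstoD(2)) auto
  then have "eventually (\<lambda>k. a (k + B) < r) sequentially"
    by (rule eventually_mono) (use bound in \<open>smt (verit)\<close>)
  then show "eventually (\<lambda>b. a b < r) sequentially"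
    by (rule eventually_sequentially_seg[THEN iffD1])
qed

lemma tendsto_zero_of_double_recursion:
  fixes a :: "nat \<Rightarrow> nat \<Rightarrow> real"
  assumes "\<And>b. a b 0 = 0" and "\<And>b m. 0 \<le> a b m" and "\<And>b m. a b m \<le> K"
    and "\<And>b m. a (Suc b) (Suc m) \<le> q * a b (Suc m) + a b m" and "0 \<le> q" "q < 1"
  shows "(\<lambda>b. a b m) \<longlonglongrightarrow> 0"
proof (induction m)
  case 0
  then show ?case using assms(1) by simp
next
  case (Suc m)
  show ?case
    by (rule tendsto_zero_of_contracting_recursion[where e = "\<lambda>b. a b m"]) (use assms Suc in auto)
qed

context singleton_bounded_selection
begin

lemma measure_exceedance_recursion:
  fixes w :: "nat \<Rightarrow> (nat \<Rightarrow> nat set) \<Rightarrow> real"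
  assumes det: "prefix_determined n (w n)"
    and mono: "\<And>h. w (n + length ls) h \<le> w n h"
    and contract: "\<And>h. follows_block n ls h \<Longrightarrow> w (n + length ls) h \<le> c * w n h"
    and ls: "set ls \<subseteq> {1..N}" and c: "0 \<le> c"
  shows "measure M (history_event M \<sigma> (\<lambda>h. c * \<theta> < w (n + length ls) h))
    \<le> (1 - \<alpha> ^ length ls) * measure M (history_event M \<sigma> (\<lambda>h. c * \<theta> < w n h))
      + measure M (history_event M \<sigma> (\<lambda>h. \<theta> < w n h))"
proof -
  let ?B = "history_event M \<sigma> (\<lambda>h. c * \<theta> < w n h)"
  let ?F = "history_event M \<sigma> (\<lambda>h. c * \<theta> < w n h \<and> follows_block n ls h)"
  let ?T = "history_event M \<sigma> (\<lambda>h. \<theta> < w n h)"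
  have det_B: "prefix_determined n (\<lambda>h. c * \<theta> < w n h)"
    and det_T: "prefix_determined n (\<lambda>h. \<theta> < w n h)"
    using prefix_determined_comp[OF det] by blast+
  have sets: "?B \<in> sets M" "?F \<in> sets M" "?T \<in> sets M"
    using det_B det_T prefix_determined_follows_block[OF det_B] by (blast intro: sets_history_event)+
  have "history_event M \<sigma> (\<lambda>h. c * \<theta> < w (n + length ls) h) \<subseteq> (?B - ?F) \<union> ?T"
  proof
    fix \<omega> assume "\<omega> \<in> history_event M \<sigma> (\<lambda>h. c * \<theta> < w (n + length ls) h)"
    then have \<omega>: "\<omega> \<in> space M" "c * \<theta> < w (n + length ls) (\<lambda>i. \<sigma> i \<omega>)"
      by (simp_all add: history_event_def)
    show "\<omega> \<in> (?B - ?F) \<union> ?T"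
    proof (cases "follows_block n ls (\<lambda>i. \<sigma> i \<omega>)")
      case True
      then have "c * \<theta> < c * w n (\<lambda>i. \<sigma> i \<omega>)" using \<omega>(2) contract by (meson less_le_trans)
      then have "\<theta> < w n (\<lambda>i. \<sigma> i \<omega>)" using c by (meson mult_left_mono not_less)
      then show ?thesis using \<omega>(1) by (simp add: history_event_def)
    next
      case False
      then show ?thesis using \<omega> mono[of "\<lambda>i. \<sigma> i \<omega>"] by (simp add: history_event_def)
    qed
  qed
  then have "measure M (history_event M \<sigma> (\<lambda>h. c * \<theta> < w (n + length ls) h))
      \<le> measure M ((?B - ?F) \<union> ?T)"
    using sets by (intro finite_measure_mono) auto
  also have "\<dots> \<le> measure M (?B - ?F) + measure M ?T"
    using sets by (intro measure_Un_le) auto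
  also have "measure M (?B - ?F) = measure M ?B - measure M ?F"
    using sets by (intro finite_measure_Diff) (auto simp: history_event_def)
  also have "\<dots> \<le> (1 - \<alpha> ^ length ls) * measure M ?B"
    using measure_history_event_follows_block[OF det_B ls] by (simp add: left_diff_distrib)
  finally show ?thesis by simp
qed

lemma tendsto_measure_block_exceedance_zero:
  fixes w :: "nat \<Rightarrow> (nat \<Rightarrow> nat set) \<Rightarrow> real"
  assumes det: "\<And>n. prefix_determined n (w n)"
    and antimono: "\<And>n n' h. n \<le> n' \<Longrightarrow> w n' h \<le> w n h" and init: "\<And>h. w 0 h \<le> D"
    and contract: "\<And>n h. follows_block n ls h \<Longrightarrow> w (n + length ls) h \<le> c * w n h"
    and ls: "set ls \<subseteq> {1..N}" and c: "0 \<le> c"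
  shows "(\<lambda>b. measure M (history_event M \<sigma> (\<lambda>h. c ^ m * D < w (b * length ls) h))) \<longlonglongrightarrow> 0"
proof (rule tendsto_zero_of_double_recursion[where K = 1 and q = "1 - \<alpha> ^ length ls"
      and a = "\<lambda>b m. measure M (history_event M \<sigma> (\<lambda>h. c ^ m * D < w (b * length ls) h))"])
  show "measure M (history_event M \<sigma> (\<lambda>h. c ^ 0 * D < w (b * length ls) h)) = 0" for b
  proof -
    have "\<not> D < w (b * length ls) h" for h using antimono[of 0 "b * length ls" h] init[of h] by simp
    then show ?thesis unfolding history_event_def by simp
  qed
  show "measure M (history_event M \<sigma> (\<lambda>h. c ^ Suc m * D < w (Suc b * length ls) h))
      \<le> (1 - \<alpha> ^ length ls) * measure M (history_event M \<sigma> (\<lambda>h. c ^ Suc m * D < w (b * length ls) h))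
        + measure M (history_event M \<sigma> (\<lambda>h. c ^ m * D < w (b * length ls) h))" for b m
    using measure_exceedance_recursion[OF det antimono contract ls c, of "b * length ls" "c ^ m * D"]
    by (simp add: add.commute mult.assoc)
  show "0 \<le> 1 - \<alpha> ^ length ls" "1 - \<alpha> ^ length ls < 1"
    using \<alpha>_pos \<alpha>_le_1 by (simp_all add: power_le_one)
qed simp_all

lemma tendsto_measure_exceedance_zero:
  fixes w :: "nat \<Rightarrow> (nat \<Rightarrow> nat set) \<Rightarrow> real"
  assumes det: "\<And>n. prefix_determined n (w n)"
    and mono: "\<And>n h. w (Suc n) h \<le> w n h" and init: "\<And>h. w 0 h \<le> D"
    and contract: "\<And>n h. follows_block n ls h \<Longrightarrow> w (n + length ls) h \<le> c * w n h"
    and ls: "ls \<noteq> []" "set ls \<subseteq> {1..N}" and c: "0 \<le> c" "c < 1" and "0 < \<delta>"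
  shows "(\<lambda>n. measure M (history_event M \<sigma> (\<lambda>h. \<delta> \<le> w n h))) \<longlonglongrightarrow> 0"
proof -
  let ?L = "length ls"
  let ?a = "\<lambda>b m. measure M (history_event M \<sigma> (\<lambda>h. c ^ m * D < w (b * ?L) h))"
  have antimono: "w n' h \<le> w n h" if "n \<le> n'" for n n' h
    using that by (induction rule: dec_induct) (auto intro: order_trans mono)
  have "(\<lambda>m. c ^ m * D) \<longlonglongrightarrow> 0" using c by (intro tendsto_mult_left_zero LIMSEQ_realpow_zero)
  then have "eventually (\<lambda>m. c ^ m * D < \<delta>) sequentially"
    using \<open>0 < \<delta>\<close> by (intro order_tendstoD(2))
  then obtain m where m: "c ^ m * D < \<delta>" by (auto simp: eventually_sequentially)
  have a_tendsto: "(\<lambda>n. ?a (n div ?L) m) \<longlonglongrightarrow> 0"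
    using ls(1) tendsto_measure_block_exceedance_zero[OF det antimono init contract ls(2) c(1)]
    by (intro filterlim_compose[OF _ filterlim_at_top_div_const_nat]) simp_all
  have le_a: "measure M (history_event M \<sigma> (\<lambda>h. \<delta> \<le> w n h)) \<le> ?a (n div ?L) m" for n
  proof -
    have "c ^ m * D < w (n div ?L * ?L) h" if "\<delta> \<le> w n h" for h
      using m that antimono[of "n div ?L * ?L" n h] by simp
    then have "history_event M \<sigma> (\<lambda>h. \<delta> \<le> w n h)
        \<subseteq> history_event M \<sigma> (\<lambda>h. c ^ m * D < w (n div ?L * ?L) h)"
      unfolding history_event_def by blast
    then show ?thesis
      by (rule finite_measure_mono) (rule sets_history_event[OF prefix_determined_comp[OF det]])
  qed
  show ?thesis
    by (rule tendsto_sandwich[OF _ _ tendsto_const a_tendsto]) (simp_all add: le_a)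
qed

lemma tendsto_measure_spread_ge_zero:
  assumes rs: "row_stochastic N A" and rooted: "rooted_graph N A" and "N \<ge> 2" and "0 < \<delta>"
  shows "(\<lambda>n. measure M {\<omega> \<in> space M. \<delta> \<le> spread N (cons_iter N A \<sigma> x1 \<omega> n)}) \<longlonglongrightarrow> 0"
proof -
  obtain r ls where r: "r \<in> {1..N}" and ord: "spanning_order N A r ls" "insert r (set ls) = {1..N}"
    using rooted_graph_spanning_order[OF rooted] .
  obtain \<eta> :: real where \<eta>: "0 < \<eta>" "\<eta> \<le> 1"
    "\<And>i j. i \<in> {1..N} \<Longrightarrow> j \<in> {1..N} \<Longrightarrow> 0 < A i j \<Longrightarrow> \<eta> \<le> A i j"
    using positive_entries_bounded_below[of N A] by blast
  have "ls \<noteq> []"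
  proof
    assume "ls = []"
    with ord(2) have "{1..N} = {r}" by simp
    moreover have "1 \<in> {1..N}" "2 \<in> {1..N}" using \<open>N \<ge> 2\<close> by auto
    ultimately show False by simp
  qed
  have "(\<lambda>n. measure M (history_event M \<sigma> (\<lambda>h. \<delta> \<le> spread N (trajectory N A h x1 n)))) \<longlonglongrightarrow> 0"
  proof (rule tendsto_measure_exceedance_zero[where c = "1 - \<eta> ^ length ls"])
    show "prefix_determined n (\<lambda>h. spread N (trajectory N A h x1 n))" for n
      by (rule prefix_determined_comp[OF prefix_determined_trajectory])
    show "spread N (trajectory N A h x1 (Suc n)) \<le> spread N (trajectory N A h x1 n)" for n h
      using rs \<open>N \<ge> 2\<close> by (simp add: spread_mat_vec_restr_matrix_le)
    show "spread N (trajectory N A h x1 (n + length ls))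
        \<le> (1 - \<eta> ^ length ls) * spread N (trajectory N A h x1 n)"
      if "follows_block n ls h" for n h
      using spread_contraction[OF rs r _ \<eta>(2,3) ord that] \<eta>(1) by simp
    show "0 \<le> 1 - \<eta> ^ length ls" "1 - \<eta> ^ length ls < 1"
      using \<eta>(1,2) by (simp_all add: power_le_one)
  qed (use \<open>ls \<noteq> []\<close> spanning_order_set[OF ord(1)] \<open>0 < \<delta>\<close> in auto)
  then show ?thesis by (simp add: history_event_def cons_iter_eq_trajectory)
qed

lemma tendsto_measure_disagreement_ge_zero:
  assumes "row_stochastic N A" and "rooted_graph N A" and "N \<ge> 2" and "0 < \<epsilon>"
  shows "(\<lambda>n. measure M {\<omega> \<in> space M. \<epsilon> \<le> disagreement N (cons_iter N A \<sigma> x1 \<omega> n)}) \<longlonglongrightarrow> 0"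
proof -
  let ?\<delta> = "sqrt (\<epsilon> / N)"
  have "?\<delta> \<le> spread N x" if "\<epsilon> \<le> disagreement N x" for x
  proof (rule real_le_lsqrt)
    show "0 \<le> spread N x" using \<open>N \<ge> 2\<close> by (simp add: spread_nonneg)
    show "\<epsilon> / N \<le> (spread N x)\<^sup>2"
      using that disagreement_le_spread[of N x] \<open>N \<ge> 2\<close> by (simp add: pos_divide_le_eq mult.commute)
  qed
  then have le: "measure M {\<omega> \<in> space M. \<epsilon> \<le> disagreement N (cons_iter N A \<sigma> x1 \<omega> n)}
      \<le> measure M {\<omega> \<in> space M. ?\<delta> \<le> spread N (cons_iter N A \<sigma> x1 \<omega> n)}" for n
    by (intro finite_measure_mono sets_cons_iter_event) auto
  have "(\<lambda>n. measure M {\<omega> \<in> space M. ?\<delta> \<le> spread N (cons_iter N A \<sigma> x1 \<omega> n)}) \<longlonglongrightarrow> 0"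
    using assms by (intro tendsto_measure_spread_ge_zero) auto
  from tendsto_sandwich[OF _ _ tendsto_const this] show ?thesis by (simp add: le)
qed

end

theorem corollary4:
  fixes M :: "'a measure" and N :: nat and A :: "nat \<Rightarrow> nat \<Rightarrow> real"
    and \<sigma> :: "nat \<Rightarrow> 'a \<Rightarrow> nat set" and x1 :: "nat \<Rightarrow> real" and \<alpha> :: real
  assumes "prob_space M"
    and "N \<ge> 1"
    and "row_stochastic N A"
    and meas: "\<And>k. k \<ge> 1 \<Longrightarrow> \<sigma> k \<in> M \<rightarrow>\<^sub>M count_space UNIV"
    and vals: "\<And>k \<omega>. k \<ge> 1 \<Longrightarrow> \<omega> \<in> space M \<Longrightarrow> \<sigma> k \<omega> \<subseteq> {1..N}"
    and a: "rooted_graph N A"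
    and "0 < \<alpha>" and "\<alpha> < 1"
    and b: "\<And>k s. k \<ge> 1 \<Longrightarrow> hist_prob M \<sigma> (k - 1) s > 0 \<Longrightarrow>
             cond_prob M \<sigma> k s \<noteq> 0 \<Longrightarrow> cond_prob M \<sigma> k s \<ge> \<alpha>"
    and c: "\<And>k s j. k \<ge> 1 \<Longrightarrow> hist_prob M \<sigma> (k - 1) s > 0 \<Longrightarrow> j \<in> {1..N} \<Longrightarrow>
             cond_prob M \<sigma> k (s(k := {j})) \<noteq> 0"
  shows "\<forall>\<epsilon>>0. (\<lambda>k. measure M {\<omega> \<in> space M.
            disagreement N (cons_iter N A \<sigma> x1 \<omega> (k - 1)) \<ge> \<epsilon>}) \<longlonglongrightarrow> 0"
proof (cases "N = 1")
  case True
  then show ?thesis by (simp add: disagreement_def)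
next
  case False
  with \<open>N \<ge> 1\<close> have "N \<ge> 2" by simp
  interpret singleton_bounded_selection M N \<sigma> \<alpha>
    by (intro singleton_bounded_selection.intro selection_process.intro singleton_bounded_selection_axioms.intro
        selection_process_axioms.intro) (use assms in auto)
  show ?thesis
  proof (intro allI impI)
    fix \<epsilon> :: real
    assume "0 < \<epsilon>"
    with \<open>N \<ge> 2\<close> assms(3) a
    have lim: "(\<lambda>n. measure M {\<omega> \<in> space M. \<epsilon> \<le> disagreement N (cons_iter N A \<sigma> x1 \<omega> n)})
        \<longlonglongrightarrow> 0"
      by (intro tendsto_measure_disagreement_ge_zero)
    show "(\<lambda>k. measure M {\<omega> \<in> space M.
        disagreement N (cons_iter N A \<sigma> x1 \<omega> (k - 1)) \<ge> \<epsilon>}) \<longlonglongrightarrow> 0"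
      by (rule LIMSEQ_imp_Suc) (simp add: lim)
  qed
qed

end
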